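(* Let $m,n\ge 1$ and let $B\subseteq [m]\times[n]$ be a board. Let $I\subseteq[m]$ with $|I|=s$ and $J\subseteq[n]$ with $|J|=t$ be such that the subboard $S=B\cap(I\times J)$ is a block of $B$, i.e. (1) for all $i,i'\in I$ and all $c\in[n]\setminus J$: $(i,c)\in B \iff (i',c)\in B$; and (2) for all $a\in[m]\setminus I$ and all $j,j'\in J$: $(a,j)\in B\iff(a,j')\in B$. For $0\le j\le \min(s,t)$ and any choice of subsets $I'\subseteq I$, $J'\subseteq J$ with $|I'|=|J'|=j$, let $$B_{S,j}=\{(a,b)\in B:\ a\notin I',\ b\notin J',\ (a,b)\notin I\times J\}$$ (the $j$-th inclusion board of $B$ relative to $S$). Then $R(B_{S,j};x)$ does not depend on the choice of $I',J'$, and $$R(B;x)=\sum_{j=0}^{\min(s,t)} r_j(S)\,x^j\,R(B_{S,j};x),$$ where $r_j(S)$ is the coefficient of $x^j$ in $R(S;x)$.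
   Context: A board is a finite set of cells $B\subseteq[m]\times[n]$ (rows indexed by $[m]=\{1,\dots,m\}$, columns by $[n]$). A placement of $k$ non-attacking rooks on $B$ is a set of $k$ cells $\{(x_1,y_1),\dots,(x_k,y_k)\}\subseteq B$ such that $x_i=x_j$ or $y_i=y_j$ implies $i=j$. For $k\ge 0$, $r_k(B)$ denotes the number of such placements (with $r_0(B)=1$), and the rook polynomial of $B$ is $R(B;x)=\sum_{k\ge 0} r_k(B)x^k$. The same definitions apply to any set of cells, in particular to $S$ and to $B_{S,j}$. *)

theory Defs
  imports "HOL-Computational_Algebra.Polynomial"
begin

type_synonym cell = "nat \<times> nat"

definition non_attacking :: "cell set \<Rightarrow> bool" where
  "non_attacking P \<longleftrightarrow>
     (\<forall>p\<in>P. \<forall>q\<in>P. (fst p = fst q \<or> snd p = snd q) \<longrightarrow> p = q)"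

definition placements :: "cell set \<Rightarrow> nat \<Rightarrow> cell set set" where
  "placements B k = {P. P \<subseteq> B \<and> finite P \<and> card P = k \<and> non_attacking P}"

definition rook_num :: "cell set \<Rightarrow> nat \<Rightarrow> nat" where
  "rook_num B k = card (placements B k)"

(* R(B;x) = sum_k r_k(B) x^k ; for a finite board r_k(B) = 0 when k > |B| *)
definition rook_poly :: "cell set \<Rightarrow> int poly" where
  "rook_poly B = (\<Sum>k\<le>card B. monom (int (rook_num B k)) k)"

definition inclusion_board ::
  "cell set \<Rightarrow> nat set \<Rightarrow> nat set \<Rightarrow> nat set \<Rightarrow> nat set \<Rightarrow> cell set" where
  "inclusion_board B I J I' J' =
     {(a, b) \<in> B. a \<notin> I' \<and> b \<notin> J' \<and> (a, b) \<notin> I \<times> J}"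

end

theory Submission
  imports Defs
begin

(* A placement P of rooks on B is determined by its trace Q = P \<inter> I \<times> J, a placement on S,
   together with P - I \<times> J, a placement on the inclusion board B_Q avoiding the rows and columns
   of Q; conversely any two such placements glue to one on B.  Hence R(B) is the sum of
   x^|Q| R(B_Q) over all placements Q on S.  The block property makes R(B_Q) depend only on |Q|:
   relabelling the rows of I unused by Q bijectively onto those unused by another Q' (identity
   outside I), and likewise the columns of J, maps B_Q into B_Q' injectively in rows and in
   columns, hence placements to placements.  Grouping the Q by size yields the coefficients r_j(S). *)

lemma non_attacking_iff_inj_on: "non_attacking P \<longleftrightarrow> inj_on fst P \<and> inj_on snd P"
  unfolding non_attacking_def inj_on_def by blast

lemma non_attacking_card_image:
  assumes "non_attacking P"
  shows "card (fst ` P) = card P" "card (snd ` P) = card P"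
  using assms by (simp_all add: non_attacking_iff_inj_on card_image)

lemma non_attacking_card_le_min:
  assumes "Q \<subseteq> I \<times> J" "non_attacking Q" "finite I" "finite J"
  shows "card Q \<le> min (card I) (card J)"
proof -
  have "fst ` Q \<subseteq> I" "snd ` Q \<subseteq> J"
    using assms(1) by auto
  then have "card (fst ` Q) \<le> card I" "card (snd ` Q) \<le> card J"
    using assms(3,4) by (simp_all add: card_mono)
  then show ?thesis
    using non_attacking_card_image[OF assms(2)] by simp
qed

lemma non_attacking_subset: "non_attacking P \<Longrightarrow> Q \<subseteq> P \<Longrightarrow> non_attacking Q"
  unfolding non_attacking_def by blast

lemma non_attacking_Un:
  assumes "Q \<inter> R = {}"
  shows "non_attacking (Q \<union> R) \<longleftrightarrow> non_attacking Q \<and> non_attacking R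
           \<and> fst ` Q \<inter> fst ` R = {} \<and> snd ` Q \<inter> snd ` R = {}"
  using assms unfolding non_attacking_def by (auto 0 3 simp: image_iff)

lemma finite_placements: "finite B \<Longrightarrow> finite (placements B k)"
  by (rule finite_subset[of _ "Pow B"]) (auto simp: placements_def)

lemma rook_num_eq_0: "finite B \<Longrightarrow> card B < k \<Longrightarrow> rook_num B k = 0"
  unfolding rook_num_def placements_def by (auto dest: card_mono)

lemma coeff_rook_poly: "finite B \<Longrightarrow> coeff (rook_poly B) k = int (rook_num B k)"
  by (cases "k \<le> card B")
    (auto simp: rook_poly_def coeff_sum rook_num_eq_0 intro: sum.neutral)

lemma rook_poly_eqI:
  "finite B1 \<Longrightarrow> finite B2 \<Longrightarrow> (\<And>k. rook_num B1 k = rook_num B2 k) \<Longrightarrow> rook_poly B1 = rook_poly B2"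
  by (rule poly_eqI) (simp add: coeff_rook_poly)

definition rook_placements :: "cell set \<Rightarrow> cell set set" where
  "rook_placements B = {P. P \<subseteq> B \<and> non_attacking P}"

lemma finite_rook_placements: "finite B \<Longrightarrow> finite (rook_placements B)"
  by (rule finite_subset[of _ "Pow B"]) (auto simp: rook_placements_def)

lemma placements_eq_rook_placements:
  "finite B \<Longrightarrow> placements B k = {P \<in> rook_placements B. card P = k}"
  by (auto simp: placements_def rook_placements_def intro: finite_subset)

lemma rook_num_le_if_map_prod_into:
  assumes "inj_on \<sigma> (fst ` B1)" "inj_on \<tau> (snd ` B1)"
    and "map_prod \<sigma> \<tau> ` B1 \<subseteq> B2" "finite B2"
  shows "rook_num B1 k \<le> rook_num B2 k"
proof -
  let ?g = "map_prod \<sigma> \<tau>"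
  have inj_g: "inj_on ?g B1"
    by (rule inj_on_subset[OF map_prod_inj_on[OF assms(1,2)]]) (auto intro: rev_image_eqI)
  have "?g ` P \<in> placements B2 k" if P: "P \<in> placements B1 k" for P
  proof -
    have "P \<subseteq> B1" "card P = k" "inj_on fst P" "inj_on snd P"
      using P by (auto simp: placements_def non_attacking_iff_inj_on)
    moreover have "inj_on \<sigma> (fst ` P)" "inj_on \<tau> (snd ` P)"
      using \<open>P \<subseteq> B1\<close> assms(1,2) by (auto intro: inj_on_subset)
    ultimately have "inj_on (fst \<circ> ?g) P" "inj_on (snd \<circ> ?g) P" "card (?g ` P) = k"
      using inj_on_subset[OF inj_g] by (auto simp: comp_inj_on card_image)
    then show ?thesis
      using P assms(3) by (auto simp: placements_def non_attacking_iff_inj_on intro: inj_on_imageI)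
  qed
  moreover have "inj_on ((`) ?g) (placements B1 k)"
    using inj_on_image_eq_iff[OF inj_g] unfolding inj_on_def placements_def by blast
  ultimately show ?thesis
    unfolding rook_num_def
    by (intro card_inj_on_le finite_placements[OF assms(4)]) auto
qed

lemma finite_inclusion_board: "finite B \<Longrightarrow> finite (inclusion_board B I J I' J')"
  by (rule finite_subset[of _ B]) (auto simp: inclusion_board_def)

lemma subset_inclusion_board_iff:
  "R \<subseteq> inclusion_board B I J I' J' \<longleftrightarrow> R \<subseteq> B - I \<times> J \<and> I' \<inter> fst ` R = {} \<and> J' \<inter> snd ` R = {}"
proof -
  have "inclusion_board B I J I' J' = {c \<in> B - I \<times> J. fst c \<notin> I' \<and> snd c \<notin> J'}"
    by (auto simp: inclusion_board_def)
  then show ?thesis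
    by blast
qed

definition is_block :: "cell set \<Rightarrow> nat set \<Rightarrow> nat set \<Rightarrow> bool" where
  "is_block B I J \<longleftrightarrow>
     (\<forall>i\<in>I. \<forall>i'\<in>I. \<forall>c. c \<notin> J \<longrightarrow> ((i, c) \<in> B \<longleftrightarrow> (i', c) \<in> B)) \<and>
     (\<forall>a j j'. a \<notin> I \<longrightarrow> j \<in> J \<longrightarrow> j' \<in> J \<longrightarrow> ((a, j) \<in> B \<longleftrightarrow> (a, j') \<in> B))"

lemma is_block_if_subset_grid:
  assumes "B \<subseteq> {1..m} \<times> {1..n}"
    and "\<forall>i\<in>I. \<forall>i'\<in>I. \<forall>c\<in>{1..n} - J. ((i, c) \<in> B \<longleftrightarrow> (i', c) \<in> B)"
    and "\<forall>a\<in>{1..m} - I. \<forall>j\<in>J. \<forall>j'\<in>J. ((a, j) \<in> B \<longleftrightarrow> (a, j') \<in> B)"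
  shows "is_block B I J"
  unfolding is_block_def
proof (intro conjI ballI allI impI)
  fix i i' c assume "i \<in> I" "i' \<in> I" "c \<notin> J"
  show "(i, c) \<in> B \<longleftrightarrow> (i', c) \<in> B"
  proof (cases "c \<in> {1..n}")
    case True
    then show ?thesis using assms(2) \<open>i \<in> I\<close> \<open>i' \<in> I\<close> \<open>c \<notin> J\<close> by blast
  next
    case False
    then show ?thesis using assms(1) by blast
  qed
next
  fix a j j' assume "a \<notin> I" "j \<in> J" "j' \<in> J"
  show "(a, j) \<in> B \<longleftrightarrow> (a, j') \<in> B"
  proof (cases "a \<in> {1..m}")
    case True
    then show ?thesis using assms(3) \<open>a \<notin> I\<close> \<open>j \<in> J\<close> \<open>j' \<in> J\<close> by blast
  next
    case False
    then show ?thesis using assms(1) by blast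
  qed
qed

lemma obtain_relabelling:
  assumes "finite I" "I1 \<subseteq> I" "I2 \<subseteq> I" "card I1 = card I2"
  obtains \<sigma> where "inj_on \<sigma> (- I1)" "\<sigma> ` (I - I1) \<subseteq> I - I2" "\<And>a. a \<notin> I \<Longrightarrow> \<sigma> a = a"
proof -
  have "card (I - I1) = card (I - I2)"
    using assms by (simp add: card_Diff_subset finite_subset)
  then obtain f where f: "bij_betw f (I - I1) (I - I2)"
    using finite_same_card_bij assms(1) by blast
  define \<sigma> where "\<sigma> a = (if a \<in> I then f a else a)" for a
  have "- I1 = (I - I1) \<union> - I"
    using assms(2) by blast
  moreover have "inj_on \<sigma> (I - I1)" "\<sigma> ` (I - I1) \<subseteq> I - I2"
    using f unfolding bij_betw_def inj_on_def \<sigma>_def by auto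
  moreover have "\<sigma> ` (- I) \<subseteq> - I"
    by (auto simp: \<sigma>_def)
  ultimately have "inj_on \<sigma> (- I1)"
    by (auto simp: inj_on_Un) (auto simp: inj_on_def \<sigma>_def)
  then show ?thesis
    using that \<open>\<sigma> ` (I - I1) \<subseteq> I - I2\<close> by (simp add: \<sigma>_def)
qed

lemma map_prod_inclusion_board_subset:
  assumes block: "is_block B I J" and "I2 \<subseteq> I" "J2 \<subseteq> J"
    and \<sigma>: "\<sigma> ` (I - I1) \<subseteq> I - I2" "\<And>a. a \<notin> I \<Longrightarrow> \<sigma> a = a"
    and \<tau>: "\<tau> ` (J - J1) \<subseteq> J - J2" "\<And>b. b \<notin> J \<Longrightarrow> \<tau> b = b"
  shows "map_prod \<sigma> \<tau> ` inclusion_board B I J I1 J1 \<subseteq> inclusion_board B I J I2 J2"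
proof clarify
  fix a b assume ab: "(a, b) \<in> inclusion_board B I J I1 J1"
  then have "(a, b) \<in> B" "a \<notin> I1" "b \<notin> J1" "a \<in> I \<longrightarrow> b \<notin> J"
    by (auto simp: inclusion_board_def)
  then consider "a \<in> I" "b \<notin> J" | "a \<notin> I" "b \<in> J" | "a \<notin> I" "b \<notin> J"
    by blast
  then show "(\<sigma> a, \<tau> b) \<in> inclusion_board B I J I2 J2"
  proof cases
    case 1
    then have "\<sigma> a \<in> I - I2"
      using \<sigma>(1) \<open>a \<notin> I1\<close> by blast
    moreover have "(\<sigma> a, b) \<in> B"
      using block 1 \<open>\<sigma> a \<in> I - I2\<close> \<open>(a, b) \<in> B\<close> unfolding is_block_def by blast
    ultimately show ?thesis
      using 1 \<tau>(2) \<open>J2 \<subseteq> J\<close> by (auto simp: inclusion_board_def)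
  next
    case 2
    then have "\<tau> b \<in> J - J2"
      using \<tau>(1) \<open>b \<notin> J1\<close> by blast
    moreover have "(a, \<tau> b) \<in> B"
      using block 2 \<open>\<tau> b \<in> J - J2\<close> \<open>(a, b) \<in> B\<close> unfolding is_block_def by blast
    ultimately show ?thesis
      using 2 \<sigma>(2) \<open>I2 \<subseteq> I\<close> by (auto simp: inclusion_board_def)
  next
    case 3
    then show ?thesis
      using \<open>(a, b) \<in> B\<close> \<sigma>(2) \<tau>(2) \<open>I2 \<subseteq> I\<close> \<open>J2 \<subseteq> J\<close>
      unfolding inclusion_board_def by auto
  qed
qed

lemma rook_poly_inclusion_board_eq:
  assumes "finite B" "is_block B I J" "finite I" "finite J"
    and "I1 \<subseteq> I" "I2 \<subseteq> I" "card I1 = card I2"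
    and "J1 \<subseteq> J" "J2 \<subseteq> J" "card J1 = card J2"
  shows "rook_poly (inclusion_board B I J I1 J1) = rook_poly (inclusion_board B I J I2 J2)"
proof -
  have le: "rook_num (inclusion_board B I J I1 J1) k \<le> rook_num (inclusion_board B I J I2 J2) k"
    if rows: "I1 \<subseteq> I" "I2 \<subseteq> I" "card I1 = card I2"
      and cols: "J1 \<subseteq> J" "J2 \<subseteq> J" "card J1 = card J2"
    for I1 I2 J1 J2 k
  proof -
    obtain \<sigma> where \<sigma>: "inj_on \<sigma> (- I1)" "\<sigma> ` (I - I1) \<subseteq> I - I2" "\<And>a. a \<notin> I \<Longrightarrow> \<sigma> a = a"
      using obtain_relabelling[OF \<open>finite I\<close> rows] by blast
    obtain \<tau> where \<tau>: "inj_on \<tau> (- J1)" "\<tau> ` (J - J1) \<subseteq> J - J2" "\<And>b. b \<notin> J \<Longrightarrow> \<tau> b = b"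
      using obtain_relabelling[OF \<open>finite J\<close> cols] by blast
    have "inj_on \<sigma> (fst ` inclusion_board B I J I1 J1)" "inj_on \<tau> (snd ` inclusion_board B I J I1 J1)"
      by (rule inj_on_subset[OF \<sigma>(1)] inj_on_subset[OF \<tau>(1)], force simp: inclusion_board_def)+
    moreover have "map_prod \<sigma> \<tau> ` inclusion_board B I J I1 J1 \<subseteq> inclusion_board B I J I2 J2"
      by (rule map_prod_inclusion_board_subset[OF assms(2) rows(2) cols(2) \<sigma>(2,3) \<tau>(2,3)])
    ultimately show ?thesis
      using finite_inclusion_board[OF \<open>finite B\<close>] by (rule rook_num_le_if_map_prod_into)
  qed
  show ?thesis
    using le[of I1 I2 J1 J2] le[of I2 I1 J2 J1] assms(5-10)
    by (intro rook_poly_eqI finite_inclusion_board \<open>finite B\<close> antisym) simp_all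
qed

lemma card_placements_with_trace:
  assumes Q: "Q \<subseteq> B \<inter> I \<times> J" "non_attacking Q" "finite Q" "card Q \<le> k"
  shows "card {P \<in> placements B k. P \<inter> I \<times> J = Q}
           = rook_num (inclusion_board B I J (fst ` Q) (snd ` Q)) (k - card Q)"
proof -
  let ?BQ = "inclusion_board B I J (fst ` Q) (snd ` Q)"
  have "bij_betw (\<lambda>R. Q \<union> R) (placements ?BQ (k - card Q)) {P \<in> placements B k. P \<inter> I \<times> J = Q}"
  proof (rule bij_betw_byWitness[where f' = "\<lambda>P. P - I \<times> J"])
    show "(\<lambda>R. Q \<union> R) ` placements ?BQ (k - card Q) \<subseteq> {P \<in> placements B k. P \<inter> I \<times> J = Q}"
    proof (rule image_subsetI)
      fix R assume "R \<in> placements ?BQ (k - card Q)"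
      then have R: "R \<subseteq> B - I \<times> J" "fst ` Q \<inter> fst ` R = {}" "snd ` Q \<inter> snd ` R = {}"
        "finite R" "card R = k - card Q" "non_attacking R"
        using subset_inclusion_board_iff by (auto simp: placements_def)
      then have "Q \<inter> R = {}"
        using Q(1) by blast
      then show "Q \<union> R \<in> {P \<in> placements B k. P \<inter> I \<times> J = Q}"
        using Q R by (auto simp: placements_def non_attacking_Un card_Un_disjoint)
    qed
    show "(\<lambda>P. P - I \<times> J) ` {P \<in> placements B k. P \<inter> I \<times> J = Q} \<subseteq> placements ?BQ (k - card Q)"
    proof (rule image_subsetI)
      fix P assume "P \<in> {P \<in> placements B k. P \<inter> I \<times> J = Q}"
      then have P: "P \<in> placements B k" "Q = P \<inter> I \<times> J"
        by auto
      then have "P = Q \<union> (P - I \<times> J)" "Q \<inter> (P - I \<times> J) = {}" "finite P"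
        by (auto simp: placements_def)
      then show "P - I \<times> J \<in> placements ?BQ (k - card Q)"
        using P non_attacking_Un[of Q "P - I \<times> J"] card_Un_disjoint[of Q "P - I \<times> J"] subset_inclusion_board_iff
        by (auto simp: placements_def)
    qed
    show "\<forall>R\<in>placements ?BQ (k - card Q). Q \<union> R - I \<times> J = R"
      using Q(1) by (auto simp: placements_def inclusion_board_def)
    show "\<forall>P\<in>{P \<in> placements B k. P \<inter> I \<times> J = Q}. Q \<union> (P - I \<times> J) = P"
      by blast
  qed
  then show ?thesis
    unfolding rook_num_def by (simp add: bij_betw_same_card)
qed

lemma rook_num_split:
  assumes "finite B"
  shows "rook_num B k = (\<Sum>Q\<in>{Q \<in> rook_placements (B \<inter> I \<times> J). card Q \<le> k}.
           rook_num (inclusion_board B I J (fst ` Q) (snd ` Q)) (k - card Q))"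
proof -
  let ?T = "{Q \<in> rook_placements (B \<inter> I \<times> J). card Q \<le> k}"
  have "finite ?T"
    using finite_rook_placements[of "B \<inter> I \<times> J"] assms by simp
  moreover have "(\<lambda>P. P \<inter> I \<times> J) ` placements B k \<subseteq> ?T"
    by (auto simp: placements_def rook_placements_def intro: non_attacking_subset card_mono order.trans)
  ultimately have "rook_num B k = (\<Sum>Q\<in>?T. card {P \<in> placements B k. P \<inter> I \<times> J = Q})"
    using sum.group[of "placements B k" ?T "\<lambda>P. P \<inter> I \<times> J" "\<lambda>_. 1 :: nat"]
      finite_placements[OF assms]
    by (simp add: rook_num_def)
  also have "\<dots> = (\<Sum>Q\<in>?T. rook_num (inclusion_board B I J (fst ` Q) (snd ` Q)) (k - card Q))"
    using assms
    by (intro sum.cong refl card_placements_with_trace) (auto simp: rook_placements_def intro: finite_subset)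
  finally show ?thesis .
qed

lemma rook_poly_split:
  assumes "finite B"
  shows "rook_poly B = (\<Sum>Q\<in>rook_placements (B \<inter> I \<times> J).
           monom 1 (card Q) * rook_poly (inclusion_board B I J (fst ` Q) (snd ` Q)))"
    (is "_ = ?rhs")
proof (rule poly_eqI)
  fix k
  let ?A = "rook_placements (B \<inter> I \<times> J)"
  let ?r = "\<lambda>Q. rook_num (inclusion_board B I J (fst ` Q) (snd ` Q)) (k - card Q)"
  have "coeff ?rhs k = (\<Sum>Q\<in>?A. if card Q \<le> k then int (?r Q) else 0)"
    unfolding coeff_sum coeff_monom_mult
    by (intro sum.cong refl) (simp add: coeff_rook_poly finite_inclusion_board assms)
  also have "\<dots> = (\<Sum>Q\<in>{Q \<in> ?A. card Q \<le> k}. int (?r Q))"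
    using assms by (simp add: sum.inter_filter finite_rook_placements)
  also have "\<dots> = coeff (rook_poly B) k"
    by (simp add: rook_num_split[OF assms, of k I J] coeff_rook_poly assms of_nat_sum)
  finally show "coeff (rook_poly B) k = coeff ?rhs k"
    by simp
qed

lemma rook_poly_block_expansion:
  assumes "finite B" "is_block B I J" "finite I" "finite J"
    and choice: "\<forall>j\<le>min (card I) (card J). Ic j \<subseteq> I \<and> Jc j \<subseteq> J \<and> card (Ic j) = j \<and> card (Jc j) = j"
  shows "rook_poly B = (\<Sum>j\<le>min (card I) (card J). smult (coeff (rook_poly (B \<inter> I \<times> J)) j)
           (monom 1 j * rook_poly (inclusion_board B I J (Ic j) (Jc j))))"
proof -
  let ?S = "B \<inter> I \<times> J" and ?M = "min (card I) (card J)"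
  let ?BQ = "\<lambda>Q. inclusion_board B I J (fst ` Q) (snd ` Q)"
  have "rook_poly B = (\<Sum>Q\<in>rook_placements ?S. monom 1 (card Q) * rook_poly (?BQ Q))"
    using assms(1) by (rule rook_poly_split)
  also have "\<dots> = (\<Sum>j\<le>?M. \<Sum>Q\<in>placements ?S j. monom 1 j * rook_poly (?BQ Q))"
  proof -
    have "card ` rook_placements ?S \<subseteq> {..?M}"
      using non_attacking_card_le_min assms(3,4) by (fastforce simp: rook_placements_def)
    then show ?thesis
      using sum.group[of "rook_placements ?S" "{..?M}" card "\<lambda>Q. monom 1 (card Q) * rook_poly (?BQ Q)"]
      by (simp add: assms(1) finite_rook_placements placements_eq_rook_placements)
  qed
  also have "\<dots> = (\<Sum>j\<le>?M. \<Sum>Q\<in>placements ?S j.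
                     monom 1 j * rook_poly (inclusion_board B I J (Ic j) (Jc j)))"
  proof (intro sum.cong refl arg_cong2[where f = "(*)"] rook_poly_inclusion_board_eq assms(1-4))
    fix j Q assume "j \<in> {..?M}" "Q \<in> placements ?S j"
    then have "Q \<subseteq> I \<times> J" "non_attacking Q" "card Q = j"
      and "Ic j \<subseteq> I" "Jc j \<subseteq> J" "card (Ic j) = j" "card (Jc j) = j"
      using choice by (auto simp: placements_def)
    then show "fst ` Q \<subseteq> I" "Ic j \<subseteq> I" "card (fst ` Q) = card (Ic j)"
      "snd ` Q \<subseteq> J" "Jc j \<subseteq> J" "card (snd ` Q) = card (Jc j)"
      by (auto simp: non_attacking_card_image)
  qed
  also have "\<dots> = (\<Sum>j\<le>?M. smult (coeff (rook_poly ?S) j)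
                     (monom 1 j * rook_poly (inclusion_board B I J (Ic j) (Jc j))))"
    using assms(1) by (simp add: coeff_rook_poly rook_num_def of_nat_poly)
  finally show ?thesis .
qed

theorem theorem3:
  fixes m n s t :: nat and B :: "cell set" and I J :: "nat set"
  assumes "m \<ge> 1" and "n \<ge> 1"
    and "B \<subseteq> {1..m} \<times> {1..n}"
    and "I \<subseteq> {1..m}" and "card I = s"
    and "J \<subseteq> {1..n}" and "card J = t"
    and block1: "\<forall>i\<in>I. \<forall>i'\<in>I. \<forall>c\<in>{1..n} - J. ((i, c) \<in> B \<longleftrightarrow> (i', c) \<in> B)"
    and block2: "\<forall>a\<in>{1..m} - I. \<forall>j\<in>J. \<forall>j'\<in>J. ((a, j) \<in> B \<longleftrightarrow> (a, j') \<in> B)"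
  shows "(\<forall>j\<le>min s t. \<forall>I1 J1 I2 J2.
            I1 \<subseteq> I \<and> J1 \<subseteq> J \<and> card I1 = j \<and> card J1 = j \<and>
            I2 \<subseteq> I \<and> J2 \<subseteq> J \<and> card I2 = j \<and> card J2 = j \<longrightarrow>
            rook_poly (inclusion_board B I J I1 J1) = rook_poly (inclusion_board B I J I2 J2))
       \<and> (\<forall>Ic Jc :: nat \<Rightarrow> nat set.
            (\<forall>j\<le>min s t. Ic j \<subseteq> I \<and> Jc j \<subseteq> J \<and> card (Ic j) = j \<and> card (Jc j) = j) \<longrightarrow>
            rook_poly B = (\<Sum>j\<le>min s t.
               smult (coeff (rook_poly (B \<inter> (I \<times> J))) j)
                 (monom 1 j * rook_poly (inclusion_board B I J (Ic j) (Jc j)))))"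
proof -
  have fin: "finite B" "finite I" "finite J"
    using assms(3,4,6) by (auto intro: finite_subset)
  have block: "is_block B I J"
    using assms(3) block1 block2 by (rule is_block_if_subset_grid)
  show ?thesis
    using rook_poly_inclusion_board_eq[OF fin(1) block fin(2,3)]
      rook_poly_block_expansion[OF fin(1) block fin(2,3)] assms(5,7)
    by auto
qed

end
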